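(* Assume Case 4 holds with index $k$. Let $(A,B)=(n_{k-1},m_{k-1})$ and for $n\ge1$ put $(A_n,B_n)=(\gamma_n-(\gamma-A)d^{n-1},\ Bd^{n-1})$ and $(A_n^*,B_n^* )=\big((\delta^{n-1}+\delta^{n-2}B+\cdots+B^{n-1})A,\ B^n\big)$. (i) If $\delta<T_{k-1}$, then for every $n\ge1$, $(A_n,B_n)$ is the vertex of $N(Q^n)$ immediately preceding $(\gamma_n,d^n)$ (in order of increasing $x$-coordinate), the segment joining them has slope $-l_1^{-1}$, and $\delta^n$ is strictly smaller than the $y$-intercept of the line through these two points. (ii) If $\delta=T_{k-1}$, then for every $n\ge1$, $(A_n^*,B_n^* )$ is the vertex of $N(Q^n)$ immediately preceding $(\gamma_n,d^n)$, the segment joining them has slope $-l_1^{-1}$, and $\delta^n$ equals the $y$-intercept of the line through these two points.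
   Context: Let $f(z,w)=(p(z),q(z,w))$ be a holomorphic skew product germ at the origin of $\mathbb{C}^2$ with $f(0,0)=(0,0)$, where $p(z)=a_\delta z^\delta+O(z^{\delta+1})$ with $a_\delta\neq0$ and integer $\delta\ge1$, and $q(z,w)=\sum_{i+j\ge1}b_{ij}z^iw^j$ is not identically zero. For $n\ge1$ write $f^n=(p^n,Q^n)$. The Newton polygon $N(g)$ of a nonzero germ $g=\sum g_{ij}z^iw^j$ is the convex hull of $\bigcup_{g_{ij}\neq0}\{(x,y):x\ge i,\ y\ge j\}$. Let $(n_1,m_1),\dots,(n_s,m_s)$ be the vertices of $N(q)$ with $n_1<\cdots<n_s$, $m_1>\cdots>m_s$; for $1\le k\le s-1$ let $T_k$ be the $y$-intercept of the line through $(n_k,m_k)$ and $(n_{k+1},m_{k+1})$. Case 4 means: $s>2$ and $T_k\le\delta\le T_{k-1}$ for some $2\le k\le s-1$; for this $k$ set $(\gamma,d)=(n_k,m_k)$, $l_1=\frac{n_k-n_{k-1}}{m_{k-1}-m_k}$ and $l_2$ defined by $l_1+l_2=\frac{n_{k+1}-n_k}{m_k-m_{k+1}}$. Define $\gamma_n=\gamma(\delta^{n-1}+\delta^{n-2}d+\cdots+d^{n-1})$. *)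

theory Defs
  imports "HOL-Analysis.Analysis"
begin

text \<open>Bivariate power series (germs at the origin of C^2) are represented by their
  coefficient functions: g i j is the coefficient of z^i w^j.\<close>
type_synonym bser = "nat \<Rightarrow> nat \<Rightarrow> complex"

definition bmul :: "bser \<Rightarrow> bser \<Rightarrow> bser" where
  "bmul f g = (\<lambda>i j. \<Sum>a\<le>i. \<Sum>b\<le>j. f a b * g (i - a) (j - b))"

fun bpow :: "bser \<Rightarrow> nat \<Rightarrow> bser" where
  "bpow f 0 = (\<lambda>i j. if i = 0 \<and> j = 0 then 1 else 0)"
| "bpow f (Suc n) = bmul f (bpow f n)"

text \<open>Substitution g(P(z,w), R(z,w)) for series P, R without constant term:
  only the terms with a + b \<le> i + j can contribute to the coefficient of z^i w^j.\<close>
definition bsubst :: "bser \<Rightarrow> bser \<Rightarrow> bser \<Rightarrow> bser" where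
  "bsubst g P R = (\<lambda>i j. \<Sum>a\<le>i + j. \<Sum>b\<le>i + j - a.
       g a b * bmul (bpow P a) (bpow R b) i j)"

definition zser :: "(nat \<Rightarrow> complex) \<Rightarrow> bser" where
  "zser p = (\<lambda>i j. if j = 0 then p i else 0)"

text \<open>Iterates f^n = (p^n, Q^n) of the skew product f = (p, q), with f^(n+1) = f o f^n.\<close>
fun skew_iter :: "(nat \<Rightarrow> complex) \<Rightarrow> bser \<Rightarrow> nat \<Rightarrow> bser \<times> bser" where
  "skew_iter p q 0 = ((\<lambda>i j. if i = 1 \<and> j = 0 then 1 else 0),
                      (\<lambda>i j. if i = 0 \<and> j = 1 then 1 else 0))"
| "skew_iter p q (Suc n) =
     (case skew_iter p q n of (P, R) \<Rightarrow> (bsubst (zser p) P R, bsubst q P R))"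

definition conv_germ1 :: "(nat \<Rightarrow> complex) \<Rightarrow> bool" where
  "conv_germ1 p \<longleftrightarrow> (\<exists>r::real>0. \<forall>z::complex. norm z < r \<longrightarrow> summable (\<lambda>i. norm (p i * z ^ i)))"

definition conv_germ2 :: "bser \<Rightarrow> bool" where
  "conv_germ2 g \<longleftrightarrow> (\<exists>r::real>0. \<forall>z w::complex. norm z < r \<and> norm w < r \<longrightarrow>
      (\<lambda>(i, j). norm (g i j * z ^ i * w ^ j)) summable_on (UNIV :: (nat \<times> nat) set))"

definition newton_polygon :: "bser \<Rightarrow> (real \<times> real) set" where
  "newton_polygon g = convex hull
     (\<Union>{{(x, y). x \<ge> real i \<and> y \<ge> real j} | i j. g i j \<noteq> 0})"

definition y_intercept :: "real \<times> real \<Rightarrow> real \<times> real \<Rightarrow> real" where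
  "y_intercept u v = snd u - (snd v - snd u) / (fst v - fst u) * fst u"

definition slope :: "real \<times> real \<Rightarrow> real \<times> real \<Rightarrow> real" where
  "slope u v = (snd v - snd u) / (fst v - fst u)"

definition preceding_vertex :: "(real \<times> real) set \<Rightarrow> real \<times> real \<Rightarrow> real \<times> real \<Rightarrow> bool" where
  "preceding_vertex S u v \<longleftrightarrow> u extreme_point_of S \<and> v extreme_point_of S \<and> fst u < fst v \<and>
     (\<forall>w. w extreme_point_of S \<longrightarrow> \<not> (fst u < fst w \<and> fst w < fst v))"

end

theory Submission
  imports Defs
begin

text \<open>Put \<open>l = 1 / l\<^sub>1\<close>, so that the edge of \<open>N(q)\<close> from \<open>(A, B)\<close> to \<open>(\<gamma>, d)\<close> lies on the line
  \<open>l x + y = T\<close> with \<open>T = T\<^sub>k\<^sub>-\<^sub>1\<close>. Since \<open>Q\<^sup>n\<^sup>+\<^sup>1 = q(p\<^sup>n, Q\<^sup>n)\<close> and \<open>p\<^sup>n\<close> has order \<open>\<delta>\<^sup>n\<close>, the monomial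
  \<open>z\<^sup>a w\<^sup>b\<close> of \<open>q\<close> contributes only terms of \<open>(l, 1)\<close>-weight at least \<open>a l \<delta>\<^sup>n + b \<mu>\<close>, where \<open>\<mu>\<close> is
  the height of the face of slope \<open>-l\<close> of \<open>N(Q\<^sup>n)\<close>. So the corresponding face of \<open>N(Q\<^sup>n\<^sup>+\<^sup>1)\<close> comes from
  the monomials of \<open>q\<close> minimising the weight \<open>(l \<delta>\<^sup>n, \<mu>)\<close>, and its two endpoints from the
  leftmost and the lowest of them. If \<open>\<delta> = T\<close>, then \<open>\<mu> = \<delta>\<^sup>n\<close>, the weight is proportional to \<open>(l, 1)\<close>
  and the whole edge of \<open>q\<close> is transported. If \<open>\<delta> < T\<close>, induction gives \<open>\<delta>\<^sup>n < \<mu>\<close> and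
  \<open>l' \<mu> < l \<delta>\<^sup>n\<close>, where \<open>-l'\<close> is the slope of the next edge; the weight then lies strictly between
  the normals of the two edges at \<open>(\<gamma>, d)\<close>, so this vertex alone contributes.\<close>

section \<open>Weighted orders of bivariate series\<close>

lemma linear_pair_inj:
  fixes c1 c2 e1 e2 dx dy :: real
  assumes "c1 * e2 \<noteq> c2 * e1" "c1 * dx + c2 * dy = 0" "e1 * dx + e2 * dy = 0"
  shows "dx = 0" "dy = 0"
proof -
  have "(c1 * e2 - c2 * e1) * dx = e2 * (c1 * dx + c2 * dy) - c2 * (e1 * dx + e2 * dy)"
    by algebra
  then show "dx = 0" using assms by simp
  have "(c1 * e2 - c2 * e1) * dy = c1 * (e1 * dx + e2 * dy) - e1 * (c1 * dx + c2 * dy)"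
    by algebra
  then show "dy = 0" using assms by simp
qed

lemma convex_comb_eq_lower_bound:
  fixes u v m A B :: real
  assumes "0 \<le> u" "0 \<le> v" "u + v = 1" "m \<le> A" "m \<le> B" "u * A + v * B = m"
  shows "u = 0 \<or> A = m" "v = 0 \<or> B = m"
proof -
  have "u * (A - m) + v * (B - m) = (u * A + v * B) - (u + v) * m"
    by (simp add: algebra_simps)
  then have "u * (A - m) + v * (B - m) = 0" using assms(3,6) by simp
  moreover have "u * (A - m) \<ge> 0" "v * (B - m) \<ge> 0" using assms by simp_all
  ultimately have "u * (A - m) = 0" "v * (B - m) = 0" by linarith+
  then show "u = 0 \<or> A = m" "v = 0 \<or> B = m" by simp_all
qed

lemma sum_eq_single:
  assumes "finite S" "a \<in> S" "\<And>x. x \<in> S \<Longrightarrow> x \<noteq> a \<Longrightarrow> f x = 0"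
  shows "sum f S = f a"
  using sum.mono_neutral_right[of S "{a}" f] assms by auto

definition weight :: "real \<Rightarrow> real \<Rightarrow> nat \<Rightarrow> nat \<Rightarrow> real" where
  "weight c1 c2 i j = c1 * real i + c2 * real j"

definition weight_ge :: "real \<Rightarrow> real \<Rightarrow> real \<Rightarrow> bser \<Rightarrow> bool" where
  "weight_ge c1 c2 m g \<longleftrightarrow> (\<forall>i j. g i j \<noteq> 0 \<longrightarrow> m \<le> weight c1 c2 i j)"

text \<open>Together with \<^term>\<open>weight_ge c1 c2 m g\<close> this is a lexicographic lower bound \<open>(m, t)\<close>
  for the pair of weights: it bounds the secondary weight on the initial form of \<open>g\<close>.\<close>
definition initial_weight_ge :: "real \<Rightarrow> real \<Rightarrow> real \<Rightarrow> real \<Rightarrow> real \<Rightarrow> real \<Rightarrow> bser \<Rightarrow> bool" where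
  "initial_weight_ge c1 c2 m e1 e2 t g \<longleftrightarrow>
     (\<forall>i j. g i j \<noteq> 0 \<longrightarrow> weight c1 c2 i j = m \<longrightarrow> t \<le> weight e1 e2 i j)"

lemma weight_coordinates [simp]: "weight 1 0 i j = real i" "weight 0 1 i j = real j"
  by (simp_all add: weight_def)

lemma weight_add: "weight c1 c2 (a + b) (c + d) = weight c1 c2 a c + weight c1 c2 b d"
  by (simp add: weight_def algebra_simps)

lemma weight_split:
  "x \<le> i \<Longrightarrow> y \<le> j \<Longrightarrow> weight c1 c2 i j = weight c1 c2 x y + weight c1 c2 (i - x) (j - y)"
  by (simp add: weight_def of_nat_diff algebra_simps)

lemma weight_inj:
  assumes "c1 * e2 \<noteq> c2 * e1"
    and "weight c1 c2 x y = weight c1 c2 a b" "weight e1 e2 x y = weight e1 e2 a b"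
  shows "x = a \<and> y = b"
proof -
  let ?dx = "real x - real a" and ?dy = "real y - real b"
  have "c1 * ?dx + c2 * ?dy = 0" "e1 * ?dx + e2 * ?dy = 0"
    using assms(2,3) by (simp_all add: weight_def algebra_simps)
  then have "?dx = 0" "?dy = 0" using linear_pair_inj[OF assms(1)] by blast+
  then show ?thesis by simp
qed

lemma bmul_nonzeroE:
  assumes "bmul g h i j \<noteq> 0"
  obtains x y where "x \<le> i" "y \<le> j" "g x y \<noteq> 0" "h (i - x) (j - y) \<noteq> 0"
proof -
  from assms obtain x where x: "x \<in> {..i}" "(\<Sum>b\<le>j. g x b * h (i - x) (j - b)) \<noteq> 0"
    unfolding bmul_def by (blast elim: sum.not_neutral_contains_not_neutral)
  then obtain y where "y \<in> {..j}" "g x y * h (i - x) (j - y) \<noteq> 0"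
    by (blast elim: sum.not_neutral_contains_not_neutral)
  with x that show ?thesis by auto
qed

lemma bmul_one_right: "bmul g (\<lambda>i j. if i = 0 \<and> j = 0 then 1 else 0) = g"
proof (intro ext)
  fix i j
  have "bmul g (\<lambda>i j. if i = 0 \<and> j = 0 then 1 else 0) i j =
      (\<Sum>a\<le>i. \<Sum>b\<le>j. if a = i \<and> b = j then g a b else 0)"
    unfolding bmul_def by (intro sum.cong refl) auto
  also have "\<dots> = g i j"
    by (subst sum_eq_single[of _ i]) (auto intro!: sum.neutral)
  finally show "bmul g (\<lambda>i j. if i = 0 \<and> j = 0 then 1 else 0) i j = g i j" .
qed

lemma weight_ge_bmul:
  assumes "weight_ge c1 c2 m g" "weight_ge c1 c2 m' h"
  shows "weight_ge c1 c2 (m + m') (bmul g h)"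
  unfolding weight_ge_def
proof (intro allI impI)
  fix i j assume "bmul g h i j \<noteq> 0"
  then obtain x y where xy: "x \<le> i" "y \<le> j" "g x y \<noteq> 0" "h (i - x) (j - y) \<noteq> 0"
    by (rule bmul_nonzeroE)
  then have "m \<le> weight c1 c2 x y" "m' \<le> weight c1 c2 (i - x) (j - y)"
    using assms unfolding weight_ge_def by auto
  then show "m + m' \<le> weight c1 c2 i j" using weight_split[OF xy(1,2), of c1 c2] by linarith
qed

lemma initial_weight_ge_bmul:
  assumes "weight_ge c1 c2 m g" "weight_ge c1 c2 m' h"
    and "initial_weight_ge c1 c2 m e1 e2 t g" "initial_weight_ge c1 c2 m' e1 e2 t' h"
  shows "initial_weight_ge c1 c2 (m + m') e1 e2 (t + t') (bmul g h)"
  unfolding initial_weight_ge_def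
proof (intro allI impI)
  fix i j assume nz: "bmul g h i j \<noteq> 0" and eq: "weight c1 c2 i j = m + m'"
  from nz obtain x y where xy: "x \<le> i" "y \<le> j" "g x y \<noteq> 0" "h (i - x) (j - y) \<noteq> 0"
    by (rule bmul_nonzeroE)
  have "m \<le> weight c1 c2 x y" "m' \<le> weight c1 c2 (i - x) (j - y)"
    using assms(1,2) xy unfolding weight_ge_def by auto
  then have "weight c1 c2 x y = m" "weight c1 c2 (i - x) (j - y) = m'"
    using weight_split[OF xy(1,2), of c1 c2] eq by linarith+
  then have "t \<le> weight e1 e2 x y" "t' \<le> weight e1 e2 (i - x) (j - y)"
    using assms(3,4) xy unfolding initial_weight_ge_def by auto
  then show "t + t' \<le> weight e1 e2 i j" using weight_split[OF xy(1,2), of e1 e2] by linarith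
qed

lemma bmul_at_initial_vertex:
  assumes "weight_ge c1 c2 m g" "weight_ge c1 c2 m' h"
    and "initial_weight_ge c1 c2 m e1 e2 t g" "initial_weight_ge c1 c2 m' e1 e2 t' h"
    and det: "c1 * e2 \<noteq> c2 * e1"
    and ab: "weight c1 c2 a b = m" "weight e1 e2 a b = t"
    and ab': "weight c1 c2 a' b' = m'" "weight e1 e2 a' b' = t'"
  shows "bmul g h (a + a') (b + b') = g a b * h a' b'"
proof -
  have zero: "g x y * h (a + a' - x) (b + b' - y) = 0"
    if xy: "x \<le> a + a'" "y \<le> b + b'" "(x, y) \<noteq> (a, b)" for x y
  proof (rule ccontr)
    assume "g x y * h (a + a' - x) (b + b' - y) \<noteq> 0"
    then have nz: "g x y \<noteq> 0" "h (a + a' - x) (b + b' - y) \<noteq> 0" by auto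
    have "m \<le> weight c1 c2 x y" "m' \<le> weight c1 c2 (a + a' - x) (b + b' - y)"
      using assms(1,2) nz unfolding weight_ge_def by auto
    moreover have "weight c1 c2 (a + a') (b + b') = m + m'" using ab ab' weight_add by simp
    ultimately have c: "weight c1 c2 x y = m" "weight c1 c2 (a + a' - x) (b + b' - y) = m'"
      using weight_split[OF xy(1,2), of c1 c2] by linarith+
    then have "t \<le> weight e1 e2 x y" "t' \<le> weight e1 e2 (a + a' - x) (b + b' - y)"
      using assms(3,4) nz unfolding initial_weight_ge_def by auto
    moreover have "weight e1 e2 (a + a') (b + b') = t + t'" using ab ab' weight_add by simp
    ultimately have "weight e1 e2 x y = t" using weight_split[OF xy(1,2), of e1 e2] by linarith
    with c ab have "x = a \<and> y = b" using weight_inj[OF det] by metis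
    with xy(3) show False by simp
  qed
  have "bmul g h (a + a') (b + b') = (\<Sum>y\<le>b + b'. g a y * h (a + a' - a) (b + b' - y))"
    unfolding bmul_def by (rule sum_eq_single) (auto intro!: sum.neutral zero)
  also have "\<dots> = g a b * h (a + a' - a) (b + b' - b)"
    using zero[of a] by (intro sum_eq_single) auto
  finally show ?thesis by simp
qed

lemma weight_ge_bpow: "weight_ge c1 c2 m g \<Longrightarrow> weight_ge c1 c2 (real n * m) (bpow g n)"
proof (induction n)
  case 0 then show ?case by (simp add: weight_ge_def weight_def)
next
  case (Suc n)
  then have "weight_ge c1 c2 (m + real n * m) (bpow g (Suc n))" using weight_ge_bmul by simp
  then show ?case by (simp add: algebra_simps)
qed

text \<open>\<open>(x0, y0)\<close> and \<open>(x1, y1)\<close> are the left and right ends of the face of the Newton polygon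
  of \<open>R\<close> cut out by the supporting line \<open>l x + y = \<mu>\<close>.\<close>
definition face_endpoints :: "real \<Rightarrow> real \<Rightarrow> nat \<Rightarrow> nat \<Rightarrow> nat \<Rightarrow> nat \<Rightarrow> bser \<Rightarrow> bool" where
  "face_endpoints l \<mu> x0 y0 x1 y1 R \<longleftrightarrow>
     weight_ge l 1 \<mu> R \<and> initial_weight_ge l 1 \<mu> 1 0 (real x0) R \<and>
     initial_weight_ge l 1 \<mu> 0 1 (real y1) R \<and>
     R x0 y0 \<noteq> 0 \<and> R x1 y1 \<noteq> 0 \<and> weight l 1 x0 y0 = \<mu> \<and> weight l 1 x1 y1 = \<mu>"

lemma face_endpoints_bmul:
  assumes l: "l > 0" and g: "face_endpoints l \<mu> x0 y0 x1 y1 g" and h: "face_endpoints l \<nu> u0 v0 u1 v1 h"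
  shows "face_endpoints l (\<mu> + \<nu>) (x0 + u0) (y0 + v0) (x1 + u1) (y1 + v1) (bmul g h)"
proof -
  have gw: "weight_ge l 1 \<mu> g"
    and gi: "initial_weight_ge l 1 \<mu> 1 0 (real x0) g" "initial_weight_ge l 1 \<mu> 0 1 (real y1) g"
    and ge: "g x0 y0 \<noteq> 0" "g x1 y1 \<noteq> 0" "weight l 1 x0 y0 = \<mu>" "weight l 1 x1 y1 = \<mu>"
    using g unfolding face_endpoints_def by auto
  have hw: "weight_ge l 1 \<nu> h"
    and hi: "initial_weight_ge l 1 \<nu> 1 0 (real u0) h" "initial_weight_ge l 1 \<nu> 0 1 (real v1) h"
    and he: "h u0 v0 \<noteq> 0" "h u1 v1 \<noteq> 0" "weight l 1 u0 v0 = \<nu>" "weight l 1 u1 v1 = \<nu>"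
    using h unfolding face_endpoints_def by auto
  have "bmul g h (x0 + u0) (y0 + v0) = g x0 y0 * h u0 v0"
    by (rule bmul_at_initial_vertex[OF gw hw gi(1) hi(1)]) (use ge he in simp_all)
  moreover have "bmul g h (x1 + u1) (y1 + v1) = g x1 y1 * h u1 v1"
    by (rule bmul_at_initial_vertex[OF gw hw gi(2) hi(2)]) (use ge he l in simp_all)
  ultimately show ?thesis
    unfolding face_endpoints_def
    using weight_ge_bmul[OF gw hw] initial_weight_ge_bmul[OF gw hw gi(1) hi(1)]
      initial_weight_ge_bmul[OF gw hw gi(2) hi(2)] ge he
    by (simp add: weight_add)
qed

lemma face_endpoints_bpow:
  assumes "l > 0" "face_endpoints l \<mu> x0 y0 x1 y1 g"
  shows "face_endpoints l (real n * \<mu>) (n * x0) (n * y0) (n * x1) (n * y1) (bpow g n)"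
proof (induction n)
  case 0
  show ?case by (simp add: face_endpoints_def weight_ge_def initial_weight_ge_def weight_def)
next
  case (Suc n)
  from face_endpoints_bmul[OF assms Suc.IH] show ?case by (simp add: algebra_simps)
qed

section \<open>Substitution into a bivariate series\<close>

lemma bsubst_nonzeroE:
  assumes "bsubst g P R i j \<noteq> 0"
  obtains a b where "g a b \<noteq> 0" "bmul (bpow P a) (bpow R b) i j \<noteq> 0"
proof -
  from assms obtain a where "(\<Sum>b\<le>i + j - a. g a b * bmul (bpow P a) (bpow R b) i j) \<noteq> 0"
    unfolding bsubst_def by (blast elim: sum.not_neutral_contains_not_neutral)
  then obtain b where "g a b * bmul (bpow P a) (bpow R b) i j \<noteq> 0"
    by (blast elim: sum.not_neutral_contains_not_neutral)
  then show ?thesis using that by auto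
qed

lemma bsubst_nonzero_single_term:
  assumes "a0 + b0 \<le> i + j" "g a0 b0 \<noteq> 0" "bmul (bpow P a0) (bpow R b0) i j \<noteq> 0"
    and unique: "\<And>a b. g a b \<noteq> 0 \<Longrightarrow> bmul (bpow P a) (bpow R b) i j \<noteq> 0 \<Longrightarrow> a = a0 \<and> b = b0"
  shows "bsubst g P R i j \<noteq> 0"
proof -
  have zero: "g a b * bmul (bpow P a) (bpow R b) i j = 0" if "(a, b) \<noteq> (a0, b0)" for a b
    using unique that by force
  have "bsubst g P R i j = (\<Sum>b\<le>i + j - a0. g a0 b * bmul (bpow P a0) (bpow R b) i j)"
    unfolding bsubst_def using assms(1) zero by (intro sum_eq_single) (auto intro!: sum.neutral)
  also have "\<dots> = g a0 b0 * bmul (bpow P a0) (bpow R b0) i j"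
    using assms(1) zero by (intro sum_eq_single) auto
  finally show ?thesis using assms(2,3) by simp
qed

definition z_series_order :: "nat \<Rightarrow> bser \<Rightarrow> bool" where
  "z_series_order D P \<longleftrightarrow> (\<forall>i j. P i j \<noteq> 0 \<longrightarrow> j = 0 \<and> D \<le> i) \<and> P D 0 \<noteq> 0"

lemma z_series_order_face:
  assumes P: "z_series_order D P" and l: "l > 0"
  shows "face_endpoints l (l * real D) D 0 D 0 P"
proof -
  have "l * real D \<le> weight l 1 i j" if "P i j \<noteq> 0" for i j
  proof -
    have "j = 0" "D \<le> i" using P that unfolding z_series_order_def by auto
    then show ?thesis using l by (simp add: weight_def)
  qed
  then show ?thesis
    using P unfolding z_series_order_def face_endpoints_def weight_ge_def initial_weight_ge_def
    by (auto simp: weight_def)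
qed

lemma z_series_order_bsubst:
  assumes D: "D \<ge> 1" and P: "z_series_order D P"
    and p_low: "\<forall>i<\<delta>. p i = 0" and p_lead: "p \<delta> \<noteq> 0"
  shows "z_series_order (\<delta> * D) (bsubst (zser p) P R)"
proof -
  have "weight_ge 0 (-1) 0 P" using P unfolding z_series_order_def weight_ge_def weight_def by auto
  note P_pow_w = weight_ge_bpow[OF this] and P_pow = face_endpoints_bpow[OF _ z_series_order_face[OF P]]
  have P_pow_supp: "j = 0 \<and> a * D \<le> i" if "bpow P a i j \<noteq> 0" for a i j
  proof -
    have "j = 0" using P_pow_w[of a] that unfolding weight_ge_def weight_def by auto
    moreover have "real (a * D) \<le> weight 1 1 i j"
      using P_pow[of 1 a] that unfolding face_endpoints_def weight_ge_def by auto
    ultimately have "real (a * D) \<le> real i" by (simp add: weight_def)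
    with \<open>j = 0\<close> show ?thesis by (simp only: of_nat_le_iff simp_thms)
  qed
  have summand: "zser p a b * bmul (bpow P a) (bpow R b) i j \<noteq> 0 \<longleftrightarrow> b = 0 \<and> p a \<noteq> 0 \<and> bpow P a i j \<noteq> 0"
    for a b i j
    by (auto simp: zser_def bmul_one_right)
  have p_order: "\<delta> \<le> a" if "p a \<noteq> 0" for a
    using p_low that by (meson not_le)
  have supp: "j = 0 \<and> \<delta> * D \<le> i" if nz: "bsubst (zser p) P R i j \<noteq> 0" for i j
  proof -
    obtain a b where "zser p a b \<noteq> 0" "bmul (bpow P a) (bpow R b) i j \<noteq> 0"
      using nz by (rule bsubst_nonzeroE)
    then have "p a \<noteq> 0" "bpow P a i j \<noteq> 0" using summand[of a b i j] by auto
    then show ?thesis using P_pow_supp p_order[of a] by (meson le_trans mult_le_mono1)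
  qed
  have "bsubst (zser p) P R (\<delta> * D) 0 \<noteq> 0"
  proof (rule bsubst_nonzero_single_term[of \<delta> 0])
    show "\<delta> + 0 \<le> \<delta> * D + 0" using D by simp
    show "bmul (bpow P \<delta>) (bpow R 0) (\<delta> * D) 0 \<noteq> 0"
      using P_pow[of 1 \<delta>] unfolding face_endpoints_def by (simp add: bmul_one_right)
    fix a b assume "zser p a b \<noteq> 0" "bmul (bpow P a) (bpow R b) (\<delta> * D) 0 \<noteq> 0"
    then have "b = 0" "p a \<noteq> 0" "bpow P a (\<delta> * D) 0 \<noteq> 0" using summand[of a b "\<delta> * D" 0] by auto
    then have "a * D \<le> \<delta> * D" using P_pow_supp by blast
    then have "a \<le> \<delta>" using D by simp
    then show "a = \<delta> \<and> b = 0" using p_order[OF \<open>p a \<noteq> 0\<close>] \<open>b = 0\<close> by simp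
  qed (use p_lead in \<open>simp add: zser_def\<close>)
  then show ?thesis unfolding z_series_order_def using supp by blast
qed

lemma face_endpoints_bmul_bpow:
  assumes l: "l > 0" and P: "z_series_order D P" and R: "face_endpoints l \<mu> x0 y0 x1 y1 R"
  shows "face_endpoints l (weight (l * real D) \<mu> a b) (a * D + b * x0) (b * y0) (a * D + b * x1) (b * y1)
    (bmul (bpow P a) (bpow R b))"
  using face_endpoints_bmul[OF l face_endpoints_bpow[OF l z_series_order_face[OF P l], of a]
      face_endpoints_bpow[OF l R, of b]]
  by (simp add: weight_def algebra_simps)

lemma bmul_bpow_initial_term:
  assumes l: "l > 0" and P: "z_series_order D P" and R: "face_endpoints l \<mu> x0 y0 x1 y1 R"
    and q_weight: "weight_ge (l * real D) \<mu> M q" and "q a b \<noteq> 0"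
    and X: "bmul (bpow P a) (bpow R b) i j \<noteq> 0"
  shows "M \<le> weight l 1 i j"
    and "weight l 1 i j = M \<Longrightarrow> weight (l * real D) \<mu> a b = M \<and> a * D + b * x0 \<le> i \<and> b * y1 \<le> j"
proof -
  have X_face: "weight_ge l 1 (weight (l * real D) \<mu> a b) (bmul (bpow P a) (bpow R b))"
    "initial_weight_ge l 1 (weight (l * real D) \<mu> a b) 1 0 (real (a * D + b * x0)) (bmul (bpow P a) (bpow R b))"
    "initial_weight_ge l 1 (weight (l * real D) \<mu> a b) 0 1 (real (b * y1)) (bmul (bpow P a) (bpow R b))"
    using face_endpoints_bmul_bpow[OF l P R, of a b] unfolding face_endpoints_def by auto
  have M_le: "M \<le> weight (l * real D) \<mu> a b"
    using q_weight \<open>q a b \<noteq> 0\<close> unfolding weight_ge_def by blast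
  moreover have X_le: "weight (l * real D) \<mu> a b \<le> weight l 1 i j"
    using X_face(1) X unfolding weight_ge_def by blast
  ultimately show "M \<le> weight l 1 i j" by linarith
  assume ij: "weight l 1 i j = M"
  then have "weight (l * real D) \<mu> a b = M" using M_le X_le by linarith
  moreover have "real (a * D + b * x0) \<le> real i" "real (b * y1) \<le> real j"
    using X_face(2,3) X ij calculation unfolding initial_weight_ge_def by auto
  ultimately show "weight (l * real D) \<mu> a b = M \<and> a * D + b * x0 \<le> i \<and> b * y1 \<le> j"
    by (simp only: of_nat_le_iff simp_thms)
qed

lemma face_bounds_bsubst:
  assumes l: "l > 0" and P: "z_series_order D P" and R: "face_endpoints l \<mu> x0 y0 x1 y1 R"
    and q_weight: "weight_ge (l * real D) \<mu> M q"
    and q_left: "\<And>a b. q a b \<noteq> 0 \<Longrightarrow> weight (l * real D) \<mu> a b = M \<Longrightarrow> x \<le> a * D + b * x0"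
    and q_right: "\<And>a b. q a b \<noteq> 0 \<Longrightarrow> weight (l * real D) \<mu> a b = M \<Longrightarrow> y \<le> b * y1"
  shows "weight_ge l 1 M (bsubst q P R)"
    and "initial_weight_ge l 1 M 1 0 (real x) (bsubst q P R)"
    and "initial_weight_ge l 1 M 0 1 (real y) (bsubst q P R)"
proof -
  note initial = bmul_bpow_initial_term[OF l P R q_weight]
  show "weight_ge l 1 M (bsubst q P R)"
    unfolding weight_ge_def by (blast elim: bsubst_nonzeroE intro: initial(1))
  show "initial_weight_ge l 1 M 1 0 (real x) (bsubst q P R)"
    unfolding initial_weight_ge_def weight_coordinates of_nat_le_iff
  proof (intro allI impI)
    fix i j assume nz: "bsubst q P R i j \<noteq> 0" and ij: "weight l 1 i j = M"
    obtain a b where ab: "q a b \<noteq> 0" "bmul (bpow P a) (bpow R b) i j \<noteq> 0"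
      using nz by (rule bsubst_nonzeroE)
    from initial(2)[OF ab ij] q_left[OF ab(1)] show "x \<le> i" by (meson le_trans)
  qed
  show "initial_weight_ge l 1 M 0 1 (real y) (bsubst q P R)"
    unfolding initial_weight_ge_def weight_coordinates of_nat_le_iff
  proof (intro allI impI)
    fix i j assume nz: "bsubst q P R i j \<noteq> 0" and ij: "weight l 1 i j = M"
    obtain a b where ab: "q a b \<noteq> 0" "bmul (bpow P a) (bpow R b) i j \<noteq> 0"
      using nz by (rule bsubst_nonzeroE)
    from initial(2)[OF ab ij] q_right[OF ab(1)] show "y \<le> j" by (meson le_trans)
  qed
qed

lemma face_endpoints_bsubst:
  fixes a0 b0 a1 b1 :: nat
  assumes l: "l > 0" and D: "D \<ge> 1" and P: "z_series_order D P"
    and R: "face_endpoints l \<mu> x0 y0 x1 y1 R" and \<mu>: "\<mu> > 0"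
    and q_weight: "weight_ge (l * real D) \<mu> M q"
    and q_left: "\<And>a b. q a b \<noteq> 0 \<Longrightarrow> weight (l * real D) \<mu> a b = M \<Longrightarrow>
      a0 * D + b0 * x0 \<le> a * D + b * x0 \<and> (a * D + b * x0 = a0 * D + b0 * x0 \<longrightarrow> a = a0 \<and> b = b0)"
    and q_right: "\<And>a b. q a b \<noteq> 0 \<Longrightarrow> weight (l * real D) \<mu> a b = M \<Longrightarrow>
      b1 * y1 \<le> b * y1 \<and> (b * y1 = b1 * y1 \<longrightarrow> a = a1 \<and> b = b1)"
    and q0: "q a0 b0 \<noteq> 0" "weight (l * real D) \<mu> a0 b0 = M"
    and q1: "q a1 b1 \<noteq> 0" "weight (l * real D) \<mu> a1 b1 = M"
  shows "face_endpoints l M (a0 * D + b0 * x0) (b0 * y0) (a1 * D + b1 * x1) (b1 * y1) (bsubst q P R)"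
proof -
  note initial = bmul_bpow_initial_term[OF l P R q_weight]
  note bounds = face_bounds_bsubst[OF l P R q_weight, of "a0 * D + b0 * x0" "b1 * y1"]
  have X_corners: "bmul (bpow P a) (bpow R b) (a * D + b * x0) (b * y0) \<noteq> 0"
    "bmul (bpow P a) (bpow R b) (a * D + b * x1) (b * y1) \<noteq> 0" for a b
    using face_endpoints_bmul_bpow[OF l P R, of a b] unfolding face_endpoints_def by auto
  have R_ends: "weight l 1 x0 y0 = \<mu>" "weight l 1 x1 y1 = \<mu>" using R unfolding face_endpoints_def by auto
  have end_weight: "weight l 1 (a * D + b * x) (b * y) = weight (l * real D) (weight l 1 x y) a b"
    for a b x y by (simp add: weight_def algebra_simps)
  have end0: "weight l 1 (a0 * D + b0 * x0) (b0 * y0) = M"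
    and end1: "weight l 1 (a1 * D + b1 * x1) (b1 * y1) = M"
    using end_weight q0(2) q1(2) R_ends by simp_all
  have terms_le: "a + b \<le> (a * D + b * x) + b * y" if "weight l 1 x y = \<mu>" for a b x y
  proof -
    have "1 \<le> x + y" using that \<mu> by (cases "x + y") (auto simp: weight_def)
    then have "a + b \<le> a * D + b * (x + y)" using D by (intro add_le_mono) simp_all
    then show ?thesis by (simp add: distrib_left add.assoc)
  qed
  have "bsubst q P R (a0 * D + b0 * x0) (b0 * y0) \<noteq> 0"
    by (rule bsubst_nonzero_single_term[of a0 b0 "a0 * D + b0 * x0" "b0 * y0" q P R,
        OF terms_le[OF R_ends(1), of a0 b0] q0(1) X_corners(1)[of a0 b0]])
      (use initial(2)[OF _ _ end0] q_left end0 in fastforce)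
  moreover have "bsubst q P R (a1 * D + b1 * x1) (b1 * y1) \<noteq> 0"
    by (rule bsubst_nonzero_single_term[of a1 b1 "a1 * D + b1 * x1" "b1 * y1" q P R,
        OF terms_le[OF R_ends(2), of a1 b1] q1(1) X_corners(2)[of a1 b1]])
      (use initial(2)[OF _ _ end1] q_right end1 in fastforce)
  ultimately show ?thesis
    unfolding face_endpoints_def using bounds q_left q_right end0 end1 by auto
qed

section \<open>Newton polygons\<close>

definition support_quadrants :: "bser \<Rightarrow> (real \<times> real) set" where
  "support_quadrants g = \<Union>{{(x, y). x \<ge> real i \<and> y \<ge> real j} | i j. g i j \<noteq> 0}"

lemma newton_polygon_eq_hull: "newton_polygon g = convex hull (support_quadrants g)"
  by (simp add: newton_polygon_def support_quadrants_def)

lemma mem_support_quadrants: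
  "p \<in> support_quadrants g \<longleftrightarrow> (\<exists>i j. g i j \<noteq> 0 \<and> fst p \<ge> real i \<and> snd p \<ge> real j)"
  unfolding support_quadrants_def by (cases p) auto

lemma support_in_newton_polygon: "g i j \<noteq> 0 \<Longrightarrow> (real i, real j) \<in> newton_polygon g"
  unfolding newton_polygon_eq_hull by (rule hull_inc) (auto simp: mem_support_quadrants)

lemma newton_polygon_shift_up:
  assumes "p \<in> newton_polygon g" "c \<ge> 0"
  shows "(fst p, snd p + c) \<in> newton_polygon g"
proof -
  let ?N = "newton_polygon g"
  define T where "T = {p. \<forall>c\<ge>0. (fst p, snd p + c) \<in> ?N}"
  have "support_quadrants g \<subseteq> T"
  proof
    fix p assume "p \<in> support_quadrants g"
    then have "(fst p, snd p + c) \<in> support_quadrants g" if "c \<ge> 0" for c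
      using that unfolding mem_support_quadrants by force
    then show "p \<in> T" unfolding T_def newton_polygon_eq_hull by (auto intro: hull_inc)
  qed
  moreover have "convex T"
  proof (rule convexI)
    fix p q :: "real \<times> real" and u v :: real
    assume "p \<in> T" "q \<in> T" "0 \<le> u" "0 \<le> v" "u + v = 1"
    show "u *\<^sub>R p + v *\<^sub>R q \<in> T" unfolding T_def
    proof (intro CollectI allI impI)
      fix c :: real assume "c \<ge> 0"
      then have "(fst p, snd p + c) \<in> ?N" "(fst q, snd q + c) \<in> ?N"
        using \<open>p \<in> T\<close> \<open>q \<in> T\<close> by (auto simp: T_def)
      then have "u *\<^sub>R (fst p, snd p + c) + v *\<^sub>R (fst q, snd q + c) \<in> ?N"
        using \<open>0 \<le> u\<close> \<open>0 \<le> v\<close> \<open>u + v = 1\<close>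
        by (intro convexD) (auto simp: newton_polygon_eq_hull)
      moreover have "(u + v) * c = c" using \<open>u + v = 1\<close> by simp
      then have "u * (snd p + c) + v * (snd q + c) = u * snd p + v * snd q + c"
        by (simp add: algebra_simps)
      ultimately show "(fst (u *\<^sub>R p + v *\<^sub>R q), snd (u *\<^sub>R p + v *\<^sub>R q) + c) \<in> ?N"
        by simp
    qed
  qed
  ultimately have "?N \<subseteq> T" unfolding newton_polygon_eq_hull by (rule hull_minimal)
  then show ?thesis using assms unfolding T_def by auto
qed

lemma convex_lex_halfspace:
  fixes c1 c2 e1 e2 m t :: real
  shows "convex {p. m \<le> c1 * fst p + c2 * snd p \<and>
    (c1 * fst p + c2 * snd p = m \<longrightarrow> t \<le> e1 * fst p + e2 * snd p)}" (is "convex ?S")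
proof (rule convexI)
  let ?L = "\<lambda>p::real \<times> real. c1 * fst p + c2 * snd p"
    and ?T = "\<lambda>p::real \<times> real. e1 * fst p + e2 * snd p"
  fix p q :: "real \<times> real" and u v :: real
  assume pq: "p \<in> ?S" "q \<in> ?S" "0 \<le> u" "0 \<le> v" "u + v = 1"
  have L: "?L (u *\<^sub>R p + v *\<^sub>R q) = u * ?L p + v * ?L q"
    and T: "?T (u *\<^sub>R p + v *\<^sub>R q) = u * ?T p + v * ?T q"
    by (simp_all add: algebra_simps)
  have "u * m + v * m \<le> u * ?L p + v * ?L q"
    using pq by (intro add_mono mult_left_mono) auto
  then have "m \<le> ?L (u *\<^sub>R p + v *\<^sub>R q)" using L pq(5) by (metis distrib_right mult_1)
  moreover have "t \<le> ?T (u *\<^sub>R p + v *\<^sub>R q)" if "?L (u *\<^sub>R p + v *\<^sub>R q) = m"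
  proof -
    have "u = 0 \<or> ?L p = m" "v = 0 \<or> ?L q = m"
      using convex_comb_eq_lower_bound[of u v m "?L p" "?L q"] pq that L by auto
    then have "u * t \<le> u * ?T p" "v * t \<le> v * ?T q"
      using pq by (auto intro: mult_left_mono)
    then show ?thesis using T pq(5) by (metis add_mono distrib_right mult_1)
  qed
  ultimately show "u *\<^sub>R p + v *\<^sub>R q \<in> ?S" by blast
qed

lemma newton_polygon_lex_weight_ge:
  fixes c1 c2 e1 e2 m t :: real
  assumes c: "c1 > 0" "c2 > 0"
    and supp: "\<And>i j. g i j \<noteq> 0 \<Longrightarrow> m \<le> c1 * real i + c2 * real j \<and>
                 (c1 * real i + c2 * real j = m \<longrightarrow> t \<le> e1 * real i + e2 * real j)"
    and p: "p \<in> newton_polygon g"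
  shows "m \<le> c1 * fst p + c2 * snd p \<and> (c1 * fst p + c2 * snd p = m \<longrightarrow> t \<le> e1 * fst p + e2 * snd p)"
proof -
  let ?L = "\<lambda>p::real \<times> real. c1 * fst p + c2 * snd p"
    and ?T = "\<lambda>p::real \<times> real. e1 * fst p + e2 * snd p"
  define S where "S = {p. m \<le> ?L p \<and> (?L p = m \<longrightarrow> t \<le> ?T p)}"
  have "support_quadrants g \<subseteq> S"
  proof
    fix p assume "p \<in> support_quadrants g"
    then obtain i j where ij: "g i j \<noteq> 0" "fst p \<ge> real i" "snd p \<ge> real j"
      by (auto simp: mem_support_quadrants)
    have le: "c1 * real i \<le> c1 * fst p" "c2 * real j \<le> c2 * snd p" using ij c by auto
    then have "m \<le> ?L p" using supp[OF ij(1)] by linarith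
    moreover have "t \<le> ?T p" if "?L p = m"
    proof -
      have "c1 * real i = c1 * fst p" "c2 * real j = c2 * snd p"
        using le that supp[OF ij(1)] by linarith+
      then have "real i = fst p" "real j = snd p" using c by auto
      then show ?thesis using that supp[OF ij(1)] by auto
    qed
    ultimately show "p \<in> S" unfolding S_def by blast
  qed
  moreover have "convex S" unfolding S_def by (rule convex_lex_halfspace)
  ultimately have "newton_polygon g \<subseteq> S" unfolding newton_polygon_eq_hull by (rule hull_minimal)
  with p show ?thesis unfolding S_def by auto
qed

lemma extreme_point_of_lex_minimum:
  fixes c1 c2 e1 e2 m t :: real
  assumes det: "c1 * e2 \<noteq> c2 * e1"
    and lex: "\<And>p. p \<in> S \<Longrightarrow> m \<le> c1 * fst p + c2 * snd p \<and>
                 (c1 * fst p + c2 * snd p = m \<longrightarrow> t \<le> e1 * fst p + e2 * snd p)"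
    and x: "x \<in> S" "c1 * fst x + c2 * snd x = m" "e1 * fst x + e2 * snd x = t"
  shows "x extreme_point_of S"
  unfolding extreme_point_of_def
proof (intro conjI ballI x(1))
  fix a b assume ab: "a \<in> S" "b \<in> S"
  show "x \<notin> open_segment a b"
  proof
    assume "x \<in> open_segment a b"
    then obtain u where u: "a \<noteq> b" "0 < u" "u < 1" "x = (1 - u) *\<^sub>R a + u *\<^sub>R b"
      by (auto simp: in_segment)
    let ?L = "\<lambda>p::real \<times> real. c1 * fst p + c2 * snd p"
      and ?T = "\<lambda>p::real \<times> real. e1 * fst p + e2 * snd p"
    have "(1 - u) * ?L a + u * ?L b = m" "(1 - u) * ?T a + u * ?T b = ?T x"
      using x(2) unfolding u(4) by (simp_all add: algebra_simps)
    then have "?L a = m" "?L b = m"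
      using convex_comb_eq_lower_bound[of "1 - u" u m "?L a" "?L b"] lex ab u by auto
    then have "?T a = t" "?T b = t"
      using convex_comb_eq_lower_bound[of "1 - u" u t "?T a" "?T b"] lex ab u x(3)
        \<open>(1 - u) * ?T a + u * ?T b = ?T x\<close> by auto
    then have "c1 * (fst a - fst b) + c2 * (snd a - snd b) = 0"
      "e1 * (fst a - fst b) + e2 * (snd a - snd b) = 0"
      using \<open>?L a = m\<close> \<open>?L b = m\<close> by (simp_all add: algebra_simps)
    then have "fst a - fst b = 0" "snd a - snd b = 0" using linear_pair_inj[OF det] by blast+
    with u(1) show False by (simp add: prod_eq_iff)
  qed
qed

lemma newton_polygon_extreme_point_in_support:
  assumes "e extreme_point_of newton_polygon g"
  obtains i j where "g i j \<noteq> 0" "e = (real i, real j)"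
proof -
  have "e \<in> support_quadrants g"
    using assms extreme_point_of_convex_hull unfolding newton_polygon_eq_hull by blast
  then obtain i j where ij: "g i j \<noteq> 0" "fst e \<ge> real i" "snd e \<ge> real j"
    by (auto simp: mem_support_quadrants)
  let ?s = "(real i, real j)" and ?t = "(2 * fst e - real i, 2 * snd e - real j)"
  have s_in: "?s \<in> newton_polygon g" using support_in_newton_polygon[of g, OF ij(1)] .
  have "?t \<in> support_quadrants g"
    unfolding mem_support_quadrants using ij by (intro exI[of _ i] exI[of _ j]) auto
  then have t_in: "?t \<in> newton_polygon g" unfolding newton_polygon_eq_hull by (rule hull_inc)
  have "e = ?s"
  proof (rule ccontr)
    assume "e \<noteq> ?s"
    then have "?s \<noteq> ?t" by (auto simp: prod_eq_iff)
    moreover have "e = (1 - 1/2) *\<^sub>R ?s + (1/2) *\<^sub>R ?t" by (simp add: prod_eq_iff field_simps)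
    ultimately have "e \<in> open_segment ?s ?t"
      unfolding in_segment by (intro conjI exI[of _ "1/2"]) auto
    then show False using assms s_in t_in unfolding extreme_point_of_def by blast
  qed
  then show ?thesis using ij that by blast
qed

text \<open>The Newton polygon is closed upwards, so a point on or above such a chord is the midpoint of
  two points of the polygon.\<close>
lemma not_extreme_point_above_chord:
  fixes c1 c2 :: real
  assumes c2: "c2 > 0"
    and N: "p1 \<in> newton_polygon g" "p2 \<in> newton_polygon g" "p3 \<in> newton_polygon g"
    and x: "fst p1 < fst p2" "fst p2 < fst p3"
    and L: "c1 * fst p1 + c2 * snd p1 \<le> c1 * fst p2 + c2 * snd p2"
           "c1 * fst p3 + c2 * snd p3 \<le> c1 * fst p2 + c2 * snd p2"
  shows "\<not> p2 extreme_point_of newton_polygon g"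
proof
  assume ext: "p2 extreme_point_of newton_polygon g"
  let ?L = "\<lambda>p::real \<times> real. c1 * fst p + c2 * snd p"
  define t where "t = (fst p2 - fst p1) / (fst p3 - fst p1)"
  have t: "0 < t" "t < 1" using x unfolding t_def by (auto simp: field_simps)
  define c where "c = (1 - t) *\<^sub>R p1 + t *\<^sub>R p3"
  have cN: "c \<in> newton_polygon g"
    unfolding c_def newton_polygon_eq_hull using t N
    by (intro convexD_alt[OF convex_convex_hull]) (auto simp: newton_polygon_eq_hull)
  have "t * (fst p3 - fst p1) = fst p2 - fst p1" unfolding t_def using x by simp
  then have cx: "fst c = fst p2" unfolding c_def by (simp add: algebra_simps)
  have "(1 - t) * ?L p1 \<le> (1 - t) * ?L p2" using L(1) t by (intro mult_left_mono) auto
  moreover have "t * ?L p3 \<le> t * ?L p2" using L(2) t by (intro mult_left_mono) auto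
  ultimately have "(1 - t) * ?L p1 + t * ?L p3 \<le> (1 - t) * ?L p2 + t * ?L p2" by (rule add_mono)
  moreover have "?L c = (1 - t) * ?L p1 + t * ?L p3" unfolding c_def by (simp add: algebra_simps)
  ultimately have "?L c \<le> ?L p2" by (simp add: algebra_simps)
  then have cy: "snd c \<le> snd p2" using cx c2 by simp
  show False
  proof (cases "snd c = snd p2")
    case True
    then have "p2 = c" using cx by (simp add: prod_eq_iff)
    moreover have "p1 \<noteq> p3" using x by auto
    ultimately have "p2 \<in> open_segment p1 p3" unfolding in_segment c_def using t by blast
    then show False using ext N unfolding extreme_point_of_def by blast
  next
    case False
    then have lt: "snd c < snd p2" using cy by simp
    let ?q = "(fst p2, snd p2 + (snd p2 - snd c))"
    have qN: "?q \<in> newton_polygon g" using newton_polygon_shift_up[OF N(2), of "snd p2 - snd c"] lt by simp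
    have "p2 = (1 - 1/2) *\<^sub>R c + (1/2) *\<^sub>R ?q" using cx by (simp add: prod_eq_iff field_simps)
    moreover have "c \<noteq> ?q" using lt by (auto simp: prod_eq_iff)
    ultimately have "p2 \<in> open_segment c ?q"
      unfolding in_segment by (intro conjI exI[of _ "1/2"]) auto
    then show False using ext cN qN unfolding extreme_point_of_def by blast
  qed
qed

text \<open>The weights are integers so that the minimum over the possibly infinite support is attained.\<close>
lemma weight_minimizing_extreme_point:
  fixes c1 c2 :: nat
  assumes c: "c1 \<ge> 1" "c2 \<ge> 1" and nz: "\<exists>i j. g i j \<noteq> 0"
  obtains i j where "(real i, real j) extreme_point_of newton_polygon g"
    "\<And>a b. g a b \<noteq> 0 \<Longrightarrow> c1 * i + c2 * j \<le> c1 * a + c2 * b"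
proof -
  define m where "m = (LEAST m. \<exists>a b. g a b \<noteq> 0 \<and> c1 * a + c2 * b = m)"
  have m_attained: "\<exists>a b. g a b \<noteq> 0 \<and> c1 * a + c2 * b = m"
    unfolding m_def by (rule LeastI_ex) (use nz in blast)
  have m_le: "m \<le> c1 * a + c2 * b" if "g a b \<noteq> 0" for a b
    unfolding m_def by (rule Least_le) (use that in blast)
  define x where "x = (LEAST i. \<exists>j. g i j \<noteq> 0 \<and> c1 * i + c2 * j = m)"
  have "\<exists>j. g x j \<noteq> 0 \<and> c1 * x + c2 * j = m"
    unfolding x_def by (rule LeastI_ex) (use m_attained in blast)
  then obtain y where xy: "g x y \<noteq> 0" "c1 * x + c2 * y = m" by blast
  have x_le: "x \<le> a" if "g a b \<noteq> 0" "c1 * a + c2 * b = m" for a b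
    unfolding x_def by (rule Least_le) (use that in blast)
  have lex: "real m \<le> real c1 * fst p + real c2 * snd p \<and>
      (real c1 * fst p + real c2 * snd p = real m \<longrightarrow> real x \<le> 1 * fst p + 0 * snd p)"
    if "p \<in> newton_polygon g" for p
  proof (rule newton_polygon_lex_weight_ge[OF _ _ _ that])
    show "real c1 > 0" "real c2 > 0" using c by auto
    fix i j assume "g i j \<noteq> 0"
    then have "m \<le> c1 * i + c2 * j" "c1 * i + c2 * j = m \<longrightarrow> x \<le> i" using m_le x_le by auto
    then show "real m \<le> real c1 * real i + real c2 * real j \<and>
        (real c1 * real i + real c2 * real j = real m \<longrightarrow> real x \<le> 1 * real i + 0 * real j)"
      by (metis (mono_tags) of_nat_add of_nat_mult of_nat_le_iff of_nat_eq_iff mult_1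
          mult_zero_left add_0_right)
  qed
  have "(real x, real y) extreme_point_of newton_polygon g"
    using c by (intro extreme_point_of_lex_minimum[OF _ lex support_in_newton_polygon[of g, OF xy(1)]])
      (auto simp: xy(2)[symmetric])
  moreover have "c1 * x + c2 * y \<le> c1 * a + c2 * b" if "g a b \<noteq> 0" for a b
    using m_le[OF that] xy(2) by simp
  ultimately show ?thesis using that by blast
qed

locale newton_vertices =
  fixes g :: bser and s :: nat and nv mv :: "nat \<Rightarrow> nat"
  assumes vertices: "{v. v extreme_point_of newton_polygon g} = (\<lambda>i. (real (nv i), real (mv i))) ` {1..s}"
    and vertices_sorted: "\<forall>i j. 1 \<le> i \<longrightarrow> i < j \<longrightarrow> j \<le> s \<longrightarrow> nv i < nv j \<and> mv j < mv i"
begin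

definition edge_slope :: "nat \<Rightarrow> real" where
  "edge_slope j = (real (mv j) - real (mv (j + 1))) / (real (nv (j + 1)) - real (nv j))"

lemma vertex_extreme: "i \<in> {1..s} \<Longrightarrow> (real (nv i), real (mv i)) extreme_point_of newton_polygon g"
  using vertices by blast

lemma vertex_in_newton_polygon: "i \<in> {1..s} \<Longrightarrow> (real (nv i), real (mv i)) \<in> newton_polygon g"
  using vertex_extreme unfolding extreme_point_of_def by blast

lemma vertex_in_support: "i \<in> {1..s} \<Longrightarrow> g (nv i) (mv i) \<noteq> 0"
  by (metis vertex_extreme newton_polygon_extreme_point_in_support of_nat_eq_iff prod.inject)

lemma vertices_sorted_step: "1 \<le> j \<Longrightarrow> j < s \<Longrightarrow> nv j < nv (j + 1) \<and> mv (j + 1) < mv j"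
  using vertices_sorted[rule_format, of j "j + 1"] by simp

lemma edge_slope_pos: "1 \<le> j \<Longrightarrow> j < s \<Longrightarrow> edge_slope j > 0"
  using vertices_sorted_step unfolding edge_slope_def by auto

lemma edge_line:
  assumes "1 \<le> j" "j < s"
  shows "edge_slope j * real (nv (j + 1)) + real (mv (j + 1)) = edge_slope j * real (nv j) + real (mv j)"
proof -
  have "real (nv (j + 1)) - real (nv j) \<noteq> 0" using vertices_sorted_step[OF assms] by simp
  then show ?thesis unfolding edge_slope_def by (simp add: field_simps)
qed

lemma lower_points_between_edge_vertices:
  assumes j: "1 \<le> j" "j < s" and p: "p \<in> newton_polygon g"
    and below: "edge_slope j * fst p + snd p \<le> edge_slope j * real (nv j) + real (mv j)"
  shows "real (nv j) \<le> fst p \<and> fst p \<le> real (nv (j + 1))"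
proof (rule ccontr)
  let ?v = "\<lambda>i. (real (nv i), real (mv i))"
  have j_in: "j \<in> {1..s}" "j + 1 \<in> {1..s}" using j by auto
  have sorted: "nv j < nv (j + 1)" using vertices_sorted_step[OF j] by simp
  note line = edge_line[OF j]
  assume "\<not> ?thesis"
  then consider "fst p < real (nv j)" | "real (nv (j + 1)) < fst p" by linarith
  then show False
  proof cases
    case 1
    have "\<not> ?v j extreme_point_of newton_polygon g"
      by (rule not_extreme_point_above_chord[where ?c1.0 = "edge_slope j" and ?c2.0 = 1,
            OF _ p vertex_in_newton_polygon[OF j_in(1)] vertex_in_newton_polygon[OF j_in(2)]])
        (use 1 sorted below line in auto)
    then show False using vertex_extreme[OF j_in(1)] by simp
  next
    case 2
    have "\<not> ?v (j + 1) extreme_point_of newton_polygon g"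
      by (rule not_extreme_point_above_chord[where ?c1.0 = "edge_slope j" and ?c2.0 = 1,
            OF _ vertex_in_newton_polygon[OF j_in(1)] vertex_in_newton_polygon[OF j_in(2)] p])
        (use 2 sorted below line in auto)
    then show False using vertex_extreme[OF j_in(2)] by simp
  qed
qed

lemma edge_supporting_line:
  assumes j: "1 \<le> j" "j < s" and ab: "g a b \<noteq> 0"
  defines "T \<equiv> edge_slope j * real (nv j) + real (mv j)"
  shows "T \<le> edge_slope j * real a + real b \<and>
    (edge_slope j * real a + real b = T \<longrightarrow> nv j \<le> a \<and> a \<le> nv (j + 1))"
proof -
  let ?l = "edge_slope j"
  define c1 where "c1 = mv j - mv (j + 1)"
  define c2 where "c2 = nv (j + 1) - nv j"
  have c: "c1 \<ge> 1" "c2 \<ge> 1" using vertices_sorted_step[OF j] unfolding c1_def c2_def by auto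
  have "real c1 = ?l * real c2"
    using vertices_sorted_step[OF j] unfolding c1_def c2_def edge_slope_def by (simp add: of_nat_diff)
  then have scaled: "real (c1 * x + c2 * y) = real c2 * (?l * real x + real y)" for x y
    by (simp add: algebra_simps)
  obtain x y where xy: "(real x, real y) extreme_point_of newton_polygon g"
    and min: "\<And>a b. g a b \<noteq> 0 \<Longrightarrow> c1 * x + c2 * y \<le> c1 * a + c2 * b"
    using weight_minimizing_extreme_point[OF c] ab by blast
  have min_line: "?l * real x + real y \<le> ?l * real a + real b" if "g a b \<noteq> 0" for a b
  proof -
    have "real (c1 * x + c2 * y) \<le> real (c1 * a + c2 * b)" using min[OF that] by (simp only: of_nat_le_iff)
    then show ?thesis unfolding scaled using c by simp
  qed
  obtain i where i: "i \<in> {1..s}" "(real x, real y) = (real (nv i), real (mv i))"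
    using xy vertices by blast
  have "T \<le> ?l * real x + real y"
  proof (rule ccontr)
    assume "\<not> ?thesis"
    then have "real (nv j) \<le> real (nv i) \<and> real (nv i) \<le> real (nv (j + 1))"
      using lower_points_between_edge_vertices[OF j vertex_in_newton_polygon[OF i(1)]] i(2)
      unfolding T_def by auto
    moreover have "nv i < nv j" if "i < j" using vertices_sorted[rule_format, of i j] that i(1) j by simp
    moreover have "nv (j + 1) < nv i" if "j + 1 < i"
      using vertices_sorted[rule_format, of "j + 1" i] that i(1) by simp
    ultimately have "\<not> i < j" "\<not> j + 1 < i" by auto
    then have "i = j \<or> i = j + 1" by linarith
    then have "?l * real x + real y = T" using i(2) edge_line[OF j] unfolding T_def by auto
    with \<open>\<not> ?thesis\<close> show False by simp
  qed
  then show ?thesis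
    using min_line[OF ab] lower_points_between_edge_vertices[OF j support_in_newton_polygon[of g, OF ab]]
    unfolding T_def by auto
qed

lemma edge_slope_decreasing:
  assumes j: "1 \<le> j" "j + 1 < s"
  shows "edge_slope (j + 1) < edge_slope j"
proof -
  let ?l = "edge_slope j" and ?l' = "edge_slope (j + 1)"
  have sorted: "nv (j + 1) < nv (j + 2)" "mv (j + 2) < mv (j + 1)"
    using vertices_sorted_step[of "j + 1"] j by simp_all
  have "g (nv (j + 2)) (mv (j + 2)) \<noteq> 0" using vertex_in_support j by simp
  from edge_supporting_line[OF _ _ this] j sorted
  have "?l * real (nv j) + real (mv j) < ?l * real (nv (j + 2)) + real (mv (j + 2))"
    by fastforce
  then have "real (mv (j + 1)) - real (mv (j + 2)) < ?l * (real (nv (j + 2)) - real (nv (j + 1)))"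
    using edge_line[of j] j by (simp add: algebra_simps)
  moreover have "real (mv (j + 1)) - real (mv (j + 2)) = ?l' * (real (nv (j + 2)) - real (nv (j + 1)))"
    using sorted unfolding edge_slope_def by (simp add: numeral_2_eq_2)
  ultimately show ?thesis using sorted by simp
qed

end

lemma face_endpoints_preceding_vertex:
  assumes l: "l > 0" and Q: "face_endpoints l \<mu> x0 y0 x1 y1 Q" and y: "y1 < y0"
  shows "preceding_vertex (newton_polygon Q) (real x0, real y0) (real x1, real y1)
    \<and> slope (real x0, real y0) (real x1, real y1) = - l
    \<and> y_intercept (real x0, real y0) (real x1, real y1) = \<mu>"
proof -
  let ?N = "newton_polygon Q" and ?u = "(real x0, real y0)" and ?v = "(real x1, real y1)"
  have ends: "Q x0 y0 \<noteq> 0" "Q x1 y1 \<noteq> 0" "l * real x0 + real y0 = \<mu>" "l * real x1 + real y1 = \<mu>"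
    using Q unfolding face_endpoints_def weight_def by auto
  have supp: "\<mu> \<le> l * real i + 1 * real j \<and>
      (l * real i + 1 * real j = \<mu> \<longrightarrow> real x0 \<le> 1 * real i + 0 * real j \<and> real y1 \<le> 0 * real i + 1 * real j)"
    if "Q i j \<noteq> 0" for i j
    using Q that unfolding face_endpoints_def weight_ge_def initial_weight_ge_def weight_def by auto
  have left: "\<mu> \<le> l * fst p + 1 * snd p \<and> (l * fst p + 1 * snd p = \<mu> \<longrightarrow> real x0 \<le> 1 * fst p + 0 * snd p)"
    if "p \<in> ?N" for p
    by (rule newton_polygon_lex_weight_ge[OF l _ _ that]) (use supp in auto)
  have right: "\<mu> \<le> l * fst p + 1 * snd p \<and> (l * fst p + 1 * snd p = \<mu> \<longrightarrow> real y1 \<le> 0 * fst p + 1 * snd p)"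
    if "p \<in> ?N" for p
    by (rule newton_polygon_lex_weight_ge[OF l _ _ that]) (use supp in auto)
  have u: "?u \<in> ?N" and v: "?v \<in> ?N"
    using support_in_newton_polygon[of Q] ends(1,2) by blast+
  have "?u extreme_point_of ?N"
    by (rule extreme_point_of_lex_minimum[OF _ left u]) (use ends in auto)
  moreover have "?v extreme_point_of ?N"
    using l by (intro extreme_point_of_lex_minimum[OF _ right v]) (use ends in auto)
  moreover have "l * real x0 < l * real x1" using ends y by linarith
  then have x: "x0 < x1" using l by simp
  moreover have "\<not> (real x0 < fst w \<and> fst w < real x1)" if "w extreme_point_of ?N" for w
  proof
    assume w: "real x0 < fst w \<and> fst w < real x1"
    have "w \<in> ?N" using that unfolding extreme_point_of_def by auto
    then have "\<not> w extreme_point_of ?N"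
      using w ends left by (intro not_extreme_point_above_chord[where ?c1.0 = l and ?c2.0 = 1, OF _ u _ v]) force+
    with that show False by simp
  qed
  ultimately have "preceding_vertex ?N ?u ?v" unfolding preceding_vertex_def by auto
  moreover have "real y1 - real y0 = - l * (real x1 - real x0)" using ends by (simp add: algebra_simps)
  then have "slope ?u ?v = - l" unfolding slope_def using x by simp
  moreover from this have "y_intercept ?u ?v = \<mu>"
    using ends unfolding y_intercept_def slope_def[symmetric] by simp
  ultimately show ?thesis by blast
qed

section \<open>Iterating the skew product\<close>

definition homog_sum :: "nat \<Rightarrow> nat \<Rightarrow> nat \<Rightarrow> nat" where
  "homog_sum a b n = (\<Sum>i<n. a ^ (n - 1 - i) * b ^ i)"

lemma homog_sum_Suc: "homog_sum a b (Suc n) = a ^ n + b * homog_sum a b n"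
proof -
  have "homog_sum a b (Suc n) = a ^ (Suc n - 1 - 0) * b ^ 0 + (\<Sum>i<n. a ^ (Suc n - 1 - Suc i) * b ^ Suc i)"
    unfolding homog_sum_def by (rule sum.lessThan_Suc_shift)
  also have "(\<Sum>i<n. a ^ (Suc n - 1 - Suc i) * b ^ Suc i) = b * homog_sum a b n"
    unfolding homog_sum_def by (simp add: sum_distrib_left algebra_simps)
  finally show ?thesis by simp
qed

lemma skew_iter_Suc_components:
  "fst (skew_iter p q (Suc n)) = bsubst (zser p) (fst (skew_iter p q n)) (snd (skew_iter p q n))"
  "snd (skew_iter p q (Suc n)) = bsubst q (fst (skew_iter p q n)) (snd (skew_iter p q n))"
  by (cases "skew_iter p q n"; simp)+

lemma z_series_order_skew_iter:
  assumes "\<delta> \<ge> 1" "\<forall>i<\<delta>. p i = 0" "p \<delta> \<noteq> 0"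
  shows "z_series_order (\<delta> ^ n) (fst (skew_iter p q n))"
proof (induction n)
  case 0 then show ?case by (simp add: z_series_order_def)
next
  case (Suc n)
  have "\<delta> ^ n \<ge> 1" using assms(1) by simp
  show ?case unfolding skew_iter_Suc_components power_Suc
    by (rule z_series_order_bsubst[OF \<open>\<delta> ^ n \<ge> 1\<close> Suc assms(2,3)])
qed

lemma face_endpoints_skew_iter_0: "face_endpoints l 1 0 1 0 1 (snd (skew_iter p q 0))"
  by (simp add: face_endpoints_def weight_ge_def initial_weight_ge_def weight_def)

text \<open>The data of Case 4 at the vertex \<open>(\<gamma>, d)\<close>: \<open>p\<close> has order \<open>\<delta>\<close>, and the edge of the Newton polygon
  of \<open>q\<close> preceding \<open>(\<gamma>, d)\<close> starts at \<open>(A, B)\<close> and lies on the line \<open>l x + y = T\<close>.\<close>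
locale skew_product_edge =
  fixes p :: "nat \<Rightarrow> complex" and q :: bser and \<delta> :: nat
    and A B \<gamma> d :: nat and l T :: real
  assumes \<delta>_pos: "\<delta> \<ge> 1" and p_low: "\<forall>i<\<delta>. p i = 0" and p_lead: "p \<delta> \<noteq> 0"
    and l_pos: "l > 0" and d_pos: "d \<ge> 1" and d_less: "d < B"
    and edge: "\<And>a b. q a b \<noteq> 0 \<Longrightarrow>
      T \<le> l * real a + real b \<and> (l * real a + real b = T \<longrightarrow> A \<le> a \<and> a \<le> \<gamma>)"
    and left_end: "q A B \<noteq> 0" "l * real A + real B = T"
    and right_end: "q \<gamma> d \<noteq> 0" "l * real \<gamma> + real d = T"
begin

lemma edge_left_end_leftmost:
  assumes "q a b \<noteq> 0" "l * real a + real b = T" and D: "real D = l * real x0 + real y0" and "y0 \<ge> 1"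
  shows "A * D + B * x0 \<le> a * D + b * x0 \<and> (a * D + b * x0 = A * D + B * x0 \<longrightarrow> a = A \<and> b = B)"
proof -
  have "A \<le> a" using edge assms(1,2) by auto
  have b: "real b = T - l * real a" and B: "real B = T - l * real A" using assms(2) left_end(2) by auto
  have key: "real (a * D + b * x0) - real (A * D + B * x0) = (real a - real A) * real y0"
    by (simp add: b B D algebra_simps)
  have "(real a - real A) * real y0 \<ge> 0" using \<open>A \<le> a\<close> by simp
  then have "A * D + B * x0 \<le> a * D + b * x0" using key by linarith
  moreover have "a = A \<and> b = B" if "a * D + b * x0 = A * D + B * x0"
  proof -
    have "(real a - real A) * real y0 = 0" using key that by simp
    then have "a = A" using \<open>y0 \<ge> 1\<close> by simp
    then show ?thesis using b B by simp
  qed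
  ultimately show ?thesis by blast
qed

lemma edge_right_end_lowest:
  assumes "q a b \<noteq> 0" "l * real a + real b = T" and "y1 \<ge> 1"
  shows "d * y1 \<le> b * y1 \<and> (b * y1 = d * y1 \<longrightarrow> a = \<gamma> \<and> b = d)"
proof -
  have "a \<le> \<gamma>" using edge assms(1,2) by auto
  have b: "real b = T - l * real a" and d: "real d = T - l * real \<gamma>" using assms(2) right_end(2) by auto
  have key: "real (b * y1) - real (d * y1) = l * (real \<gamma> - real a) * real y1"
    by (simp add: b d algebra_simps)
  have "l * (real \<gamma> - real a) * real y1 \<ge> 0" using \<open>a \<le> \<gamma>\<close> l_pos by simp
  then have "d * y1 \<le> b * y1" using key by linarith
  moreover have "a = \<gamma> \<and> b = d" if "b * y1 = d * y1"
  proof -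
    have "l * (real \<gamma> - real a) * real y1 = 0" using key that by simp
    then have "a = \<gamma>" using \<open>y1 \<ge> 1\<close> l_pos by simp
    then show ?thesis using b d by simp
  qed
  ultimately show ?thesis by blast
qed

text \<open>If the face of \<open>R\<close> has height \<open>\<mu> = D\<close>, the weight \<open>(l D, \<mu>)\<close> on \<open>q\<close> is proportional to
  \<open>(l, 1)\<close>, so the whole edge of \<open>q\<close> is transported.\<close>
lemma face_endpoints_bsubst_edge:
  assumes D: "D \<ge> 1" and P: "z_series_order D P" and R: "face_endpoints l (real D) x0 y0 x1 y1 R"
    and y: "y0 \<ge> 1" "y1 \<ge> 1"
  shows "face_endpoints l (real D * T) (A * D + B * x0) (B * y0) (\<gamma> * D + d * x1) (d * y1) (bsubst q P R)"
proof -
  have D_pos: "real D > 0" using D by simp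
  have D_end: "real D = l * real x0 + real y0" using R unfolding face_endpoints_def weight_def by simp
  have scaled: "weight (l * real D) (real D) a b = real D * (l * real a + real b)" for a b
    by (simp add: weight_def algebra_simps)
  have on_edge: "l * real a + real b = T" if "weight (l * real D) (real D) a b = real D * T" for a b
    using that D_pos unfolding scaled by simp
  show ?thesis
  proof (rule face_endpoints_bsubst[OF l_pos D P R D_pos])
    show "weight_ge (l * real D) (real D) (real D * T) q"
      unfolding weight_ge_def scaled using edge D_pos by simp
    show "A * D + B * x0 \<le> a * D + b * x0 \<and> (a * D + b * x0 = A * D + B * x0 \<longrightarrow> a = A \<and> b = B)"
      if "q a b \<noteq> 0" "weight (l * real D) (real D) a b = real D * T" for a b
      using edge_left_end_leftmost[OF that(1) on_edge[OF that(2)] D_end y(1)] .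
    show "d * y1 \<le> b * y1 \<and> (b * y1 = d * y1 \<longrightarrow> a = \<gamma> \<and> b = d)"
      if "q a b \<noteq> 0" "weight (l * real D) (real D) a b = real D * T" for a b
      using edge_right_end_lowest[OF that(1) on_edge[OF that(2)] y(2)] .
  qed (use left_end right_end scaled in simp_all)
qed

text \<open>If the weight \<open>(l D, \<mu>)\<close> lies strictly between the normals \<open>(l, 1)\<close> and \<open>(l', 1)\<close> of the
  two edges of \<open>q\<close> at \<open>(\<gamma>, d)\<close>, then only the vertex \<open>(\<gamma>, d)\<close> contributes to the new face.\<close>
lemma face_endpoints_bsubst_vertex:
  assumes l': "l' < l" and D: "D \<ge> 1" and P: "z_series_order D P"
    and R: "face_endpoints l \<mu> x0 y0 x1 y1 R" and \<mu>: "real D < \<mu>" "l' * \<mu> < l * real D"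
    and next_edge: "\<And>a b. q a b \<noteq> 0 \<Longrightarrow>
      l' * real \<gamma> + real d \<le> l' * real a + real b \<and> (l' * real a + real b = l' * real \<gamma> + real d \<longrightarrow> \<gamma> \<le> a)"
  shows "face_endpoints l (weight (l * real D) \<mu> \<gamma> d)
    (\<gamma> * D + d * x0) (d * y0) (\<gamma> * D + d * x1) (d * y1) (bsubst q P R)"
proof -
  define s where "s = (l * real D - l' * \<mu>) / (l - l')"
  define t where "t = \<mu> - s"
  have s: "s > 0" unfolding s_def using l' \<mu> by simp
  have "t = l * (\<mu> - real D) / (l - l')" unfolding t_def s_def using l' by (simp add: field_simps)
  then have t: "t > 0" using l_pos l' \<mu> by simp
  have "s * (l - l') = l * real D - l' * \<mu>" unfolding s_def using l' by simp
  then have sl: "s * l + t * l' = l * real D" unfolding t_def by (simp add: algebra_simps)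
  have split: "weight (l * real D) \<mu> a b = s * (l * real a + real b) + t * (l' * real a + real b)" for a b
  proof -
    have "s * (l * real a + real b) + t * (l' * real a + real b) = (s * l + t * l') * real a + (s + t) * real b"
      by (simp add: algebra_simps)
    also have "\<dots> = weight (l * real D) \<mu> a b" unfolding sl weight_def by (simp add: t_def)
    finally show ?thesis ..
  qed
  let ?M = "weight (l * real D) \<mu> \<gamma> d"
  have unique_min: "?M \<le> weight (l * real D) \<mu> a b \<and> (weight (l * real D) \<mu> a b = ?M \<longrightarrow> a = \<gamma> \<and> b = d)"
    if "q a b \<noteq> 0" for a b
  proof -
    have ineqs: "s * T \<le> s * (l * real a + real b)"
        "t * (l' * real \<gamma> + real d) \<le> t * (l' * real a + real b)"
      using edge[OF that] next_edge[OF that] s t by auto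
    have M: "?M = s * T + t * (l' * real \<gamma> + real d)" using split[of \<gamma> d] right_end(2) by simp
    then have le: "?M \<le> weight (l * real D) \<mu> a b" using split[of a b] ineqs by linarith
    have "a = \<gamma> \<and> b = d" if eq: "weight (l * real D) \<mu> a b = ?M"
    proof -
      have "s * T = s * (l * real a + real b)" "t * (l' * real \<gamma> + real d) = t * (l' * real a + real b)"
        using eq M split[of a b] ineqs by linarith+
      then have "l * real a + real b = T" "l' * real a + real b = l' * real \<gamma> + real d" using s t by auto
      then have "a \<le> \<gamma>" "\<gamma> \<le> a" using edge[OF \<open>q a b \<noteq> 0\<close>] next_edge[OF \<open>q a b \<noteq> 0\<close>] by auto
      then show ?thesis using \<open>l * real a + real b = T\<close> right_end(2) by simp
    qed
    with le show ?thesis by blast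
  qed
  show ?thesis
  proof (rule face_endpoints_bsubst[OF l_pos D P R])
    show "\<mu> > 0" using D \<mu> by simp
    show "weight_ge (l * real D) \<mu> ?M q" using unique_min unfolding weight_ge_def by blast
  qed (use unique_min right_end(1) in auto)
qed

lemma z_series_order_iter: "z_series_order (\<delta> ^ n) (fst (skew_iter p q n))"
  using z_series_order_skew_iter[OF \<delta>_pos p_low p_lead] .

lemma critical_faces:
  assumes T: "T = real \<delta>"
  shows "face_endpoints l (real \<delta> ^ n) (homog_sum \<delta> B n * A) (B ^ n) (\<gamma> * homog_sum \<delta> d n) (d ^ n)
    (snd (skew_iter p q n))"
proof (induction n)
  case 0
  show ?case using face_endpoints_skew_iter_0[of l p q] by (simp add: homog_sum_def)
next
  case (Suc n)
  have R: "face_endpoints l (real (\<delta> ^ n)) (homog_sum \<delta> B n * A) (B ^ n) (\<gamma> * homog_sum \<delta> d n) (d ^ n)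
      (snd (skew_iter p q n))"
    using Suc by simp
  have "face_endpoints l (real (\<delta> ^ n) * T) (A * \<delta> ^ n + B * (homog_sum \<delta> B n * A)) (B * B ^ n)
      (\<gamma> * \<delta> ^ n + d * (\<gamma> * homog_sum \<delta> d n)) (d * d ^ n) (snd (skew_iter p q (Suc n)))"
    unfolding skew_iter_Suc_components
    by (rule face_endpoints_bsubst_edge[OF _ z_series_order_iter R]) (use \<delta>_pos d_pos d_less in simp_all)
  moreover have "real (\<delta> ^ n) * T = real \<delta> ^ Suc n" using T by simp
  moreover have "A * \<delta> ^ n + B * (homog_sum \<delta> B n * A) = homog_sum \<delta> B (Suc n) * A"
    "\<gamma> * \<delta> ^ n + d * (\<gamma> * homog_sum \<delta> d n) = \<gamma> * homog_sum \<delta> d (Suc n)"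
    by (simp_all add: homog_sum_Suc algebra_simps)
  ultimately show ?case by (metis power_Suc)
qed

text \<open>The heights \<open>\<mu>\<close> of the faces in the subcritical case satisfy
  \<open>\<mu>\<^sub>n\<^sub>+\<^sub>1 = l \<gamma> \<delta>\<^sup>n + d \<mu>\<^sub>n\<close>; this keeps the weight \<open>(l \<delta>\<^sup>n, \<mu>\<^sub>n)\<close> strictly between the two edges at \<open>(\<gamma>, d)\<close>.\<close>
lemma subcritical_height_step:
  assumes \<delta>_less: "real \<delta> < T" and next_line: "l' * real \<gamma> + real d \<le> real \<delta>"
    and \<mu>: "real \<delta> ^ n \<le> \<mu>" "l' * \<mu> < l * real \<delta> ^ n"
  shows "real \<delta> ^ Suc n < l * real \<gamma> * real \<delta> ^ n + real d * \<mu>"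
    and "l' * (l * real \<gamma> * real \<delta> ^ n + real d * \<mu>) < l * real \<delta> ^ Suc n"
proof -
  have "real d * real \<delta> ^ n \<le> real d * \<mu>" using \<mu>(1) by (simp add: mult_left_mono)
  have "real \<delta> ^ n * real \<delta> < real \<delta> ^ n * T" using \<delta>_less \<delta>_pos by simp
  also have "\<dots> \<le> l * real \<gamma> * real \<delta> ^ n + real d * \<mu>"
    using \<open>real d * real \<delta> ^ n \<le> real d * \<mu>\<close> unfolding right_end(2)[symmetric]
    by (simp add: algebra_simps)
  finally show "real \<delta> ^ Suc n < l * real \<gamma> * real \<delta> ^ n + real d * \<mu>" by (simp add: mult.commute)
  have "real d * (l' * \<mu>) < real d * (l * real \<delta> ^ n)" using \<mu>(2) d_pos by simp
  then have "l' * (l * real \<gamma> * real \<delta> ^ n + real d * \<mu>) < l * real \<delta> ^ n * (l' * real \<gamma> + real d)"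
    by (simp add: algebra_simps)
  also have "\<dots> \<le> l * real \<delta> ^ n * real \<delta>" using next_line l_pos by (intro mult_left_mono) auto
  finally show "l' * (l * real \<gamma> * real \<delta> ^ n + real d * \<mu>) < l * real \<delta> ^ Suc n"
    by (simp add: algebra_simps)
qed

text \<open>The left endpoint \<open>A\<^sub>n\<close> is described by its real value to avoid truncated subtraction.\<close>
lemma subcritical_faces:
  assumes \<delta>_less: "real \<delta> < T" and l': "l' < l"
    and next_edge: "\<And>a b. q a b \<noteq> 0 \<Longrightarrow>
      l' * real \<gamma> + real d \<le> l' * real a + real b \<and> (l' * real a + real b = l' * real \<gamma> + real d \<longrightarrow> \<gamma> \<le> a)"
    and next_line: "l' * real \<gamma> + real d \<le> real \<delta>"
  defines "\<mu> n \<equiv> l * real (\<gamma> * homog_sum \<delta> d n) + real d ^ n"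
  shows "\<exists>x. real x = real (\<gamma> * homog_sum \<delta> d (Suc m)) - (real \<gamma> - real A) * real d ^ m \<and>
    face_endpoints l (\<mu> (Suc m)) x (B * d ^ m) (\<gamma> * homog_sum \<delta> d (Suc m)) (d ^ Suc m)
      (snd (skew_iter p q (Suc m))) \<and>
    real \<delta> ^ Suc m < \<mu> (Suc m) \<and> l' * \<mu> (Suc m) < l * real \<delta> ^ Suc m"
proof (induction m)
  case 0
  have "face_endpoints l (real (\<delta> ^ 0) * T) (A * \<delta> ^ 0 + B * 0) (B * 1) (\<gamma> * \<delta> ^ 0 + d * 0) (d * 1)
      (snd (skew_iter p q (Suc 0)))"
    unfolding skew_iter_Suc_components
    by (rule face_endpoints_bsubst_edge[OF _ z_series_order_iter]) (use face_endpoints_skew_iter_0 in simp_all)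
  moreover have \<mu>1: "\<mu> 1 = T" unfolding \<mu>_def using right_end(2) by (simp add: homog_sum_def)
  moreover have "real \<delta> < T" "l' * T < l * real \<delta>"
    using subcritical_height_step[OF \<delta>_less next_line, of 0 1] l' right_end(2) by (simp_all add: add.commute)
  ultimately show ?case by (intro exI[of _ A]) (simp add: homog_sum_def)
next
  case (Suc m)
  define n where "n = Suc m"
  obtain x where x: "real x = real (\<gamma> * homog_sum \<delta> d n) - (real \<gamma> - real A) * real d ^ m"
    and R: "face_endpoints l (\<mu> n) x (B * d ^ m) (\<gamma> * homog_sum \<delta> d n) (d ^ n) (snd (skew_iter p q n))"
    and IH: "real \<delta> ^ n < \<mu> n" "l' * \<mu> n < l * real \<delta> ^ n"
    using Suc.IH unfolding n_def by blast
  have face: "face_endpoints l (weight (l * real (\<delta> ^ n)) (\<mu> n) \<gamma> d) (\<gamma> * \<delta> ^ n + d * x) (d * (B * d ^ m))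
      (\<gamma> * \<delta> ^ n + d * (\<gamma> * homog_sum \<delta> d n)) (d * d ^ n) (snd (skew_iter p q (Suc n)))"
    unfolding skew_iter_Suc_components
    by (rule face_endpoints_bsubst_vertex[OF l' _ z_series_order_iter R _ _ next_edge])
      (use IH \<delta>_pos in simp_all)
  have \<mu>_Suc: "\<mu> (Suc n) = l * real \<gamma> * real \<delta> ^ n + real d * \<mu> n"
    unfolding \<mu>_def by (simp add: homog_sum_Suc algebra_simps)
  have height: "weight (l * real (\<delta> ^ n)) (\<mu> n) \<gamma> d = \<mu> (Suc n)"
    unfolding \<mu>_Suc weight_def by (simp add: algebra_simps)
  have "real (\<gamma> * \<delta> ^ n + d * x) =
      real \<gamma> * real \<delta> ^ n + real d * (real (\<gamma> * homog_sum \<delta> d n) - (real \<gamma> - real A) * real d ^ m)"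
    using x by simp
  also have "\<dots> = real (\<gamma> * homog_sum \<delta> d (Suc n)) - (real \<gamma> - real A) * real d ^ n"
    unfolding homog_sum_Suc by (simp add: n_def algebra_simps)
  finally have x_Suc: "real (\<gamma> * \<delta> ^ n + d * x) =
      real (\<gamma> * homog_sum \<delta> d (Suc n)) - (real \<gamma> - real A) * real d ^ n" .
  have "real \<delta> ^ Suc n < \<mu> (Suc n)" "l' * \<mu> (Suc n) < l * real \<delta> ^ Suc n"
    using subcritical_height_step[OF \<delta>_less next_line] IH unfolding \<mu>_Suc by simp_all
  moreover have "d * (B * d ^ m) = B * d ^ n" "d * d ^ n = d ^ Suc n"
    "\<gamma> * \<delta> ^ n + d * (\<gamma> * homog_sum \<delta> d n) = \<gamma> * homog_sum \<delta> d (Suc n)"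
    by (simp_all add: n_def homog_sum_Suc algebra_simps)
  ultimately show ?case
    using face x_Suc unfolding n_def[symmetric] height by (metis (no_types, lifting))
qed

lemma subcritical_preceding_vertex:
  assumes \<delta>_less: "real \<delta> < T" and l': "l' < l"
    and next_edge: "\<And>a b. q a b \<noteq> 0 \<Longrightarrow>
      l' * real \<gamma> + real d \<le> l' * real a + real b \<and> (l' * real a + real b = l' * real \<gamma> + real d \<longrightarrow> \<gamma> \<le> a)"
    and next_line: "l' * real \<gamma> + real d \<le> real \<delta>" and n: "n \<ge> 1"
  shows "let u = (real (\<gamma> * homog_sum \<delta> d n) - (real \<gamma> - real A) * real d ^ (n - 1), real B * real d ^ (n - 1));
      v = (real (\<gamma> * homog_sum \<delta> d n), real (d ^ n))
    in preceding_vertex (newton_polygon (snd (skew_iter p q n))) u v \<and> slope u v = - l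
      \<and> real \<delta> ^ n < y_intercept u v"
proof -
  obtain m where m: "n = Suc m" using n by (cases n) auto
  obtain x where x: "real x = real (\<gamma> * homog_sum \<delta> d n) - (real \<gamma> - real A) * real d ^ m"
    and face: "face_endpoints l (l * real (\<gamma> * homog_sum \<delta> d n) + real d ^ n) x (B * d ^ m)
      (\<gamma> * homog_sum \<delta> d n) (d ^ n) (snd (skew_iter p q n))"
    and height: "real \<delta> ^ n < l * real (\<gamma> * homog_sum \<delta> d n) + real d ^ n"
    using subcritical_faces[OF \<delta>_less l' next_edge next_line, of m] unfolding m by blast
  have "d ^ n < B * d ^ m" using d_less d_pos m by simp
  from face_endpoints_preceding_vertex[OF l_pos face this] show ?thesis
    using x height m by (simp add: Let_def)
qed

lemma critical_preceding_vertex: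
  assumes T: "T = real \<delta>" and n: "n \<ge> 1"
  shows "let u = (real (homog_sum \<delta> B n * A), real (B ^ n));
      v = (real (\<gamma> * homog_sum \<delta> d n), real (d ^ n))
    in preceding_vertex (newton_polygon (snd (skew_iter p q n))) u v \<and> slope u v = - l
      \<and> real \<delta> ^ n = y_intercept u v"
proof -
  have "d ^ n < B ^ n" using d_less n by (simp add: power_strict_mono)
  from face_endpoints_preceding_vertex[OF l_pos critical_faces[OF T] this] show ?thesis
    by (simp add: Let_def)
qed

end

lemma (in newton_vertices) edge_y_intercept:
  assumes "1 \<le> j" "j < s"
  shows "y_intercept (real (nv j), real (mv j)) (real (nv (j + 1)), real (mv (j + 1)))
    = edge_slope j * real (nv j) + real (mv j)"
proof -
  have "real (nv (j + 1)) - real (nv j) \<noteq> 0" using vertices_sorted_step[OF assms] by simp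
  then show ?thesis unfolding y_intercept_def edge_slope_def by (simp add: field_simps)
qed

lemma (in newton_vertices) skew_product_edge_before_vertex:
  assumes "\<delta> \<ge> 1" "\<forall>i<\<delta>. p i = 0" "p \<delta> \<noteq> 0" and k: "2 \<le> k" "k < s"
  shows "skew_product_edge p g \<delta> (nv (k - 1)) (mv (k - 1)) (nv k) (mv k)
    (edge_slope (k - 1)) (edge_slope (k - 1) * real (nv (k - 1)) + real (mv (k - 1)))"
proof -
  have j: "1 \<le> k - 1" "k - 1 < s" and k1: "k - 1 + 1 = k" using k by auto
  have "mv s < mv k" using vertices_sorted k by auto
  then show ?thesis
    using assms vertices_sorted_step[OF j] edge_slope_pos[OF j] edge_supporting_line[OF j]
      edge_line[OF j] vertex_in_support j
    unfolding skew_product_edge_def k1 by auto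
qed

theorem proposition6:
  fixes p :: "nat \<Rightarrow> complex" and q :: bser and \<delta> :: nat
    and s k :: nat and nv mv :: "nat \<Rightarrow> nat"
  assumes p_conv: "conv_germ1 p" and p_low: "\<forall>i<\<delta>. p i = 0" and p_lead: "p \<delta> \<noteq> 0"
    and \<delta>_pos: "\<delta> \<ge> 1"
    and q_conv: "conv_germ2 q" and q_fix: "q 0 0 = 0" and q_nz: "\<exists>i j. q i j \<noteq> 0"
    and verts: "{v. v extreme_point_of newton_polygon q} = (\<lambda>i. (real (nv i), real (mv i))) ` {1..s}"
    and order: "\<forall>i j. 1 \<le> i \<longrightarrow> i < j \<longrightarrow> j \<le> s \<longrightarrow> nv i < nv j \<and> mv j < mv i"
    and s_gt: "s > 2" and k_lo: "2 \<le> k" and k_hi: "k \<le> s - 1"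
    and case4_lo: "y_intercept (real (nv k), real (mv k)) (real (nv (k+1)), real (mv (k+1))) \<le> real \<delta>"
    and case4_hi: "real \<delta> \<le> y_intercept (real (nv (k-1)), real (mv (k-1))) (real (nv k), real (mv k))"
  shows
   "(real \<delta> < y_intercept (real (nv (k-1)), real (mv (k-1))) (real (nv k), real (mv k)) \<longrightarrow>
      (\<forall>n\<ge>1.
        let Qn = snd (skew_iter p q n);
            \<gamma>n = real (nv k * (\<Sum>i<n. \<delta> ^ (n - 1 - i) * mv k ^ i));
            u = (\<gamma>n - (real (nv k) - real (nv (k-1))) * real (mv k) ^ (n - 1),
                 real (mv (k-1)) * real (mv k) ^ (n - 1));
            v = (\<gamma>n, real (mv k ^ n))
        in preceding_vertex (newton_polygon Qn) u v
           \<and> slope u v = - 1 / ((real (nv k) - real (nv (k-1))) / (real (mv (k-1)) - real (mv k)))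
           \<and> real \<delta> ^ n < y_intercept u v))
    \<and>
    (real \<delta> = y_intercept (real (nv (k-1)), real (mv (k-1))) (real (nv k), real (mv k)) \<longrightarrow>
      (\<forall>n\<ge>1.
        let Qn = snd (skew_iter p q n);
            \<gamma>n = real (nv k * (\<Sum>i<n. \<delta> ^ (n - 1 - i) * mv k ^ i));
            u = (real ((\<Sum>i<n. \<delta> ^ (n - 1 - i) * mv (k-1) ^ i) * nv (k-1)),
                 real (mv (k-1) ^ n));
            v = (\<gamma>n, real (mv k ^ n))
        in preceding_vertex (newton_polygon Qn) u v
           \<and> slope u v = - 1 / ((real (nv k) - real (nv (k-1))) / (real (mv (k-1)) - real (mv k)))
           \<and> real \<delta> ^ n = y_intercept u v))"
proof -
  interpret newton_vertices q s nv mv using verts order by unfold_locales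
  have k: "k < s" "1 \<le> k - 1" "k - 1 < s" "k - 1 + 1 = k" using k_lo k_hi s_gt by auto
  interpret skew_product_edge p q \<delta> "nv (k - 1)" "mv (k - 1)" "nv k" "mv k"
    "edge_slope (k - 1)" "edge_slope (k - 1) * real (nv (k - 1)) + real (mv (k - 1))"
    using skew_product_edge_before_vertex[OF \<delta>_pos p_low p_lead k_lo k(1)] .
  have T: "y_intercept (real (nv (k-1)), real (mv (k-1))) (real (nv k), real (mv k))
      = edge_slope (k - 1) * real (nv (k - 1)) + real (mv (k - 1))"
    using edge_y_intercept[OF k(2,3)] unfolding k(4) .
  have slope_eq: "- 1 / ((real (nv k) - real (nv (k-1))) / (real (mv (k-1)) - real (mv k)))
      = - edge_slope (k - 1)"
    unfolding edge_slope_def k(4) by (simp add: minus_divide_left)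
  have l': "edge_slope k < edge_slope (k - 1)" using edge_slope_decreasing[of "k - 1"] k by simp
  have next_edge: "edge_slope k * real (nv k) + real (mv k) \<le> edge_slope k * real a + real b \<and>
      (edge_slope k * real a + real b = edge_slope k * real (nv k) + real (mv k) \<longrightarrow> nv k \<le> a)"
    if "q a b \<noteq> 0" for a b
    using edge_supporting_line[OF _ k(1) that] k by auto
  have next_line: "edge_slope k * real (nv k) + real (mv k) \<le> real \<delta>"
    using case4_lo edge_y_intercept[of k] k by simp
  show ?thesis
    using subcritical_preceding_vertex[OF _ l' next_edge next_line] critical_preceding_vertex
    unfolding T slope_eq homog_sum_def[symmetric] by (auto simp: Let_def)
qed

end
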